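(* As $n\to\infty$, $k(n)=\sqrt{n}\,(1+o(1))$.
   Context: A system on $n$ elements is a triple $(\mathcal{F},w,s)$ where $\mathcal{F}=(F_1,\dots,F_m)$ is a collection of subsets of $[n]=\{1,\dots,n\}$, $w\in[0,1]^m$ with $\sum_i w_i=1$, and $s\in[0,1]^{m\times m\times n}$ with $\sum_p s_{ijp}=1$ for all $i,j\in[m]$. It is intersecting if for all $i,j\in[m]$, $p\in[n]$: $s_{ijp}>0$ implies $p\in F_i\cap F_j$. It is balanced if for all $p\in[n]$, $\sum_{i=1}^m\sum_{j=1}^m w_iw_js_{ijp}=1/n$. Its cardinality is the size of the largest set in $\mathcal{F}$. $k(n)$ is the minimum $k$ such that there exists a balanced intersecting system on $n$ elements with cardinality $k$. *)

theory Defs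
  imports Complex_Main "HOL-Library.Landau_Symbols"
begin

definition is_system ::
  "nat \<Rightarrow> nat \<Rightarrow> (nat \<Rightarrow> nat set) \<Rightarrow> (nat \<Rightarrow> real) \<Rightarrow> (nat \<Rightarrow> nat \<Rightarrow> nat \<Rightarrow> real) \<Rightarrow> bool" where
  "is_system n m F w s \<longleftrightarrow>
     (\<forall>i\<in>{1..m}. F i \<subseteq> {1..n}) \<and>
     (\<forall>i\<in>{1..m}. 0 \<le> w i \<and> w i \<le> 1) \<and>
     (\<Sum>i=1..m. w i) = 1 \<and>
     (\<forall>i\<in>{1..m}. \<forall>j\<in>{1..m}. \<forall>p\<in>{1..n}. 0 \<le> s i j p \<and> s i j p \<le> 1) \<and>
     (\<forall>i\<in>{1..m}. \<forall>j\<in>{1..m}. (\<Sum>p=1..n. s i j p) = 1)"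

definition is_intersecting ::
  "nat \<Rightarrow> nat \<Rightarrow> (nat \<Rightarrow> nat set) \<Rightarrow> (nat \<Rightarrow> nat \<Rightarrow> nat \<Rightarrow> real) \<Rightarrow> bool" where
  "is_intersecting n m F s \<longleftrightarrow>
     (\<forall>i\<in>{1..m}. \<forall>j\<in>{1..m}. \<forall>p\<in>{1..n}. s i j p > 0 \<longrightarrow> p \<in> F i \<inter> F j)"

definition is_balanced ::
  "nat \<Rightarrow> nat \<Rightarrow> (nat \<Rightarrow> real) \<Rightarrow> (nat \<Rightarrow> nat \<Rightarrow> nat \<Rightarrow> real) \<Rightarrow> bool" where
  "is_balanced n m w s \<longleftrightarrow>
     (\<forall>p\<in>{1..n}. (\<Sum>i=1..m. \<Sum>j=1..m. w i * w j * s i j p) = 1 / real n)"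

definition system_cardinality :: "nat \<Rightarrow> (nat \<Rightarrow> nat set) \<Rightarrow> nat" where
  "system_cardinality m F = Max ((\<lambda>i. card (F i)) ` {1..m})"

definition k_min :: "nat \<Rightarrow> nat" where
  "k_min n = (LEAST k. \<exists>m F w s. is_system n m F w s \<and> is_intersecting n m F s \<and>
                  is_balanced n m w s \<and> system_cardinality m F = k)"

end

theory Submission
  imports Defs "HOL-Algebra.Elementary_Groups" "HOL-Number_Theory.Number_Theory" "HOL-Real_Asymp.Real_Asymp"
begin

(* The lower bound k(n) >= sqrt n is an averaging argument: if c(x) is the total weight of the
   sets containing the point x, balancedness forces c(x)^2 >= 1/n, while the sum of all c(x) is
   the average set size.

   For the upper bound, products and disjoint unions of systems give k(ab) <= k(a) k(b) and
   k(a + b) <= k(a) + k(b).  If D is a difference basis of a finite abelian group G (every element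
   is b^-1 a with a, b in D), the translates of D form a system, so k(|G|) <= |D|.  This gives
   k(m) <= 2 sqrt m + 3 from a basis of Z_m, and k(p^2) <= p + O(sqrt p) from the parabola
   {(y, y^2)} in Z_p x Z_p together with a small basis of the axis {0} x Z_p.
   Given n, put x = (ln sqrt n)^2 and take primes x < p < q <= 6x with x^0.6 <= q - p <= x^0.9;
   they exist by Chebyshev's bounds and pigeonhole.  Some P = p^a q^b lies in
   (sqrt n (p/q), sqrt n], hence k(n) <= k(P^2) + k(n - P^2) <= P (1 + O(x^-1/2))^(a+b) + O(sqrt (n - P^2)),
   and both error terms are o(sqrt n). *)

section \<open>Balanced systems on arbitrary finite sets\<close>

locale balanced_system =
  fixes X :: "'x set" and I :: "'i set" and F :: "'i \<Rightarrow> 'x set"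
    and w :: "'i \<Rightarrow> real" and s :: "'i \<Rightarrow> 'i \<Rightarrow> 'x \<Rightarrow> real" and K :: nat
  assumes finite_ground: "finite X" and finite_index: "finite I"
    and set_subset: "i \<in> I \<Longrightarrow> F i \<subseteq> X"
    and card_set_le: "i \<in> I \<Longrightarrow> card (F i) \<le> K"
    and weight_nonneg: "i \<in> I \<Longrightarrow> 0 \<le> w i"
    and weight_sum: "sum w I = 1"
    and dist_nonneg: "i \<in> I \<Longrightarrow> j \<in> I \<Longrightarrow> x \<in> X \<Longrightarrow> 0 \<le> s i j x"
    and dist_sum: "i \<in> I \<Longrightarrow> j \<in> I \<Longrightarrow> sum (s i j) X = 1"
    and dist_support: "i \<in> I \<Longrightarrow> j \<in> I \<Longrightarrow> x \<in> X \<Longrightarrow> 0 < s i j x \<Longrightarrow> x \<in> F i \<inter> F j"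
    and balanced: "x \<in> X \<Longrightarrow> (\<Sum>i\<in>I. \<Sum>j\<in>I. w i * w j * s i j x) = 1 / card X"
begin

lemma index_nonempty: "I \<noteq> {}"
  using weight_sum by auto

lemma card_ground_pos: "0 < card X"
  using index_nonempty dist_sum finite_ground by (fastforce simp: card_gt_0_iff)

lemma weight_le_one: "i \<in> I \<Longrightarrow> w i \<le> 1"
  using member_le_sum[of i I w] weight_nonneg weight_sum finite_index by auto

lemma dist_le_one: "i \<in> I \<Longrightarrow> j \<in> I \<Longrightarrow> x \<in> X \<Longrightarrow> s i j x \<le> 1"
  using member_le_sum[of x X "s i j"] dist_nonneg dist_sum finite_ground by auto

lemma reindex:
  assumes f: "bij_betw f X' X" and g: "bij_betw g I' I"
  shows "balanced_system X' I' (\<lambda>i. f -` F (g i) \<inter> X') (\<lambda>i. w (g i))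
           (\<lambda>i j x. s (g i) (g j) (f x)) K"
proof -
  have gI: "g i \<in> I" if "i \<in> I'" for i
    using g that by (auto simp: bij_betw_def)
  have fX: "f x \<in> X" if "x \<in> X'" for x
    using f that by (auto simp: bij_betw_def)
  have card_preimage: "card (f -` F (g i) \<inter> X') = card (F (g i))" if "i \<in> I'" for i
  proof (rule bij_betw_same_card)
    have "F (g i) \<subseteq> f ` X'"
      using f set_subset[OF gI[OF that]] by (simp add: bij_betw_def)
    then have "f ` (f -` F (g i) \<inter> X') = F (g i)" by blast
    then show "bij_betw f (f -` F (g i) \<inter> X') (F (g i))"
      using f by (auto simp: bij_betw_def intro: inj_on_subset)
  qed
  show ?thesis
  proof unfold_locales
    show "finite X'" using bij_betw_finite[OF f] finite_ground by simp
    show "finite I'" using bij_betw_finite[OF g] finite_index by simp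
    show "sum (\<lambda>i. w (g i)) I' = 1"
      using sum.reindex_bij_betw[OF g, of w] weight_sum by simp
    show "(\<Sum>x\<in>X'. s (g i) (g j) (f x)) = 1" if "i \<in> I'" "j \<in> I'" for i j
      using sum.reindex_bij_betw[OF f, of "s (g i) (g j)"] dist_sum[OF gI gI] that by simp
    show "(\<Sum>i\<in>I'. \<Sum>j\<in>I'. w (g i) * w (g j) * s (g i) (g j) (f x)) = 1 / card X'"
      if "x \<in> X'" for x
    proof -
      have "(\<Sum>j\<in>I'. w i * w (g j) * s i (g j) (f x)) = (\<Sum>j\<in>I. w i * w j * s i j (f x))" for i
        using sum.reindex_bij_betw[OF g, of "\<lambda>j. w i * w j * s i j (f x)"] .
      then have "(\<Sum>i\<in>I'. \<Sum>j\<in>I'. w (g i) * w (g j) * s (g i) (g j) (f x)) =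
            (\<Sum>i\<in>I. \<Sum>j\<in>I. w i * w j * s i j (f x))"
        using sum.reindex_bij_betw[OF g, of "\<lambda>i. \<Sum>j\<in>I. w i * w j * s i j (f x)"] by simp
      then show ?thesis
        using balanced[OF fX[OF that]] bij_betw_same_card[OF f] by simp
    qed
    show "x \<in> (f -` F (g i) \<inter> X') \<inter> (f -` F (g j) \<inter> X')"
      if "i \<in> I'" "j \<in> I'" "x \<in> X'" "0 < s (g i) (g j) (f x)" for i j x
      using dist_support[OF gI gI fX] that by auto
  qed (use card_preimage card_set_le gI fX weight_nonneg dist_nonneg in auto)
qed

end

lemma balanced_system_standard_iff:
  "balanced_system {1..n} {1..m} F w s K \<longleftrightarrow>
     is_system n m F w s \<and> is_intersecting n m F s \<and> is_balanced n m w s \<and>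
     system_cardinality m F \<le> K"
proof
  assume "balanced_system {1..n} {1..m} F w s K"
  then interpret balanced_system "{1..n}" "{1..m}" F w s K .
  have "m \<noteq> 0" using index_nonempty by simp
  then show "is_system n m F w s \<and> is_intersecting n m F s \<and> is_balanced n m w s \<and>
     system_cardinality m F \<le> K"
    unfolding is_system_def is_intersecting_def is_balanced_def system_cardinality_def
    using set_subset weight_nonneg weight_le_one weight_sum dist_nonneg dist_le_one dist_sum
      dist_support balanced card_set_le by auto
next
  assume sys: "is_system n m F w s \<and> is_intersecting n m F s \<and> is_balanced n m w s \<and>
     system_cardinality m F \<le> K"
  then have "m \<noteq> 0" by (cases m) (auto simp: is_system_def)
  then have "card (F i) \<le> K" if "i \<in> {1..m}" for i
    using sys that by (auto simp: system_cardinality_def)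
  with sys show "balanced_system {1..n} {1..m} F w s K"
    by unfold_locales (auto simp: is_system_def is_intersecting_def is_balanced_def)
qed

lemma k_min_le_standard:
  assumes "balanced_system {1..n} {1..m::nat} F w s K"
  shows "k_min n \<le> K"
proof -
  have "k_min n \<le> system_cardinality m F"
    unfolding k_min_def using assms[unfolded balanced_system_standard_iff] by (blast intro: Least_le)
  also have "\<dots> \<le> K" using assms[unfolded balanced_system_standard_iff] by blast
  finally show ?thesis .
qed

lemma (in balanced_system) k_min_card_le: "k_min (card X) \<le> K"
proof -
  obtain f where f: "bij_betw f {1..card X} X"
    using ex_bij_betw_nat_finite_1[OF finite_ground] by blast
  obtain g where g: "bij_betw g {1..card I} I"
    using ex_bij_betw_nat_finite_1[OF finite_index] by blast
  show ?thesis by (rule k_min_le_standard[OF reindex[OF f g]])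
qed

lemma balanced_system_single:
  "1 \<le> n \<Longrightarrow> balanced_system {1..n} {1..1::nat} (\<lambda>_. {1..n}) (\<lambda>_. 1) (\<lambda>_ _ _. 1 / n) n"
  by unfold_locales auto

lemma k_min_le_self: "1 \<le> n \<Longrightarrow> k_min n \<le> n"
  using k_min_le_standard[OF balanced_system_single] .

lemma k_min_attained:
  assumes "1 \<le> n"
  obtains m F w s where "balanced_system {1..n} {1..m::nat} F w s (k_min n)"
proof -
  let ?P = "\<lambda>k. \<exists>m F w s. is_system n m F w s \<and> is_intersecting n m F s \<and>
                  is_balanced n m w s \<and> system_cardinality m F = k"
  have "?P (system_cardinality 1 (\<lambda>_. {1..n}))"
    using balanced_system_single[OF assms] unfolding balanced_system_standard_iff by blast
  then have "?P (k_min n)"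
    unfolding k_min_def by (rule LeastI)
  then show ?thesis
    using that unfolding balanced_system_standard_iff by (metis order_refl)
qed

lemma (in balanced_system) sqrt_card_le: "sqrt (card X) \<le> K"
proof -
  define c where "c x = (\<Sum>i\<in>I. w i * of_bool (x \<in> F i))" for x
  have c_nonneg: "0 \<le> c x" for x
    unfolding c_def using weight_nonneg by (simp add: sum_nonneg)
  have "1 / card X \<le> (c x)\<^sup>2" if x: "x \<in> X" for x
  proof -
    have "s i j x \<le> of_bool (x \<in> F i) * of_bool (x \<in> F j)" if "i \<in> I" "j \<in> I" for i j
      using dist_support[OF that x] dist_le_one[OF that x] by (cases "0 < s i j x") auto
    then have "(\<Sum>i\<in>I. \<Sum>j\<in>I. w i * w j * s i j x) \<le>
               (\<Sum>i\<in>I. \<Sum>j\<in>I. w i * w j * (of_bool (x \<in> F i) * of_bool (x \<in> F j)))"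
      by (intro sum_mono mult_left_mono) (auto simp: weight_nonneg)
    also have "\<dots> = (c x)\<^sup>2"
      unfolding c_def power2_eq_square sum_product by (intro sum.cong refl) (simp add: algebra_simps)
    finally show ?thesis using balanced[OF x] by simp
  qed
  then have "1 / sqrt (card X) \<le> c x" if "x \<in> X" for x
    using real_sqrt_le_mono[of "1 / card X" "(c x)\<^sup>2"] c_nonneg that by (simp add: real_sqrt_divide)
  then have "sqrt (card X) \<le> (\<Sum>x\<in>X. c x)"
    using sum_mono[of X "\<lambda>_. 1 / sqrt (card X)" c] card_ground_pos by (simp add: real_div_sqrt)
  also have "\<dots> = (\<Sum>i\<in>I. w i * card (F i))"
    unfolding c_def using finite_ground set_subset
    by (subst sum.swap) (simp add: sum_distrib_left[symmetric] Int_absorb1 flip: sum.inter_filter)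
  also have "\<dots> \<le> (\<Sum>i\<in>I. w i * K)"
    by (intro sum_mono mult_left_mono) (simp_all add: card_set_le weight_nonneg)
  also have "\<dots> = K"
    using weight_sum by (simp flip: sum_distrib_right)
  finally show ?thesis .
qed

lemma sqrt_le_k_min: "1 \<le> n \<Longrightarrow> sqrt n \<le> k_min n"
  by (metis k_min_attained balanced_system.sqrt_card_le card_atLeastAtMost diff_Suc_1)

section \<open>Products and disjoint unions\<close>

lemma balanced_system_product:
  assumes "balanced_system X I F w s K" and "balanced_system Y J G u t L"
  shows "balanced_system (X \<times> Y) (I \<times> J) (\<lambda>(i, j). F i \<times> G j) (\<lambda>(i, j). w i * u j)
           (\<lambda>(i, j) (i', j') (x, y). s i i' x * t j j' y) (K * L)"
proof -
  interpret A: balanced_system X I F w s K by fact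
  interpret B: balanced_system Y J G u t L by fact
  show ?thesis
  proof unfold_locales
    show "card ((\<lambda>(i, j). F i \<times> G j) ij) \<le> K * L" if "ij \<in> I \<times> J" for ij
      using that A.card_set_le B.card_set_le by (auto simp: card_cartesian_product intro!: mult_le_mono)
    show "sum (\<lambda>(i, j). w i * u j) (I \<times> J) = 1"
      using A.weight_sum B.weight_sum by (simp flip: sum.cartesian_product sum_product)
    show "sum ((\<lambda>(i, j) (i', j') (x, y). s i i' x * t j j' y) ij ij') (X \<times> Y) = 1"
      if "ij \<in> I \<times> J" "ij' \<in> I \<times> J" for ij ij'
      using that A.dist_sum B.dist_sum by (auto simp flip: sum.cartesian_product sum_product)
    show "xy \<in> (\<lambda>(i, j). F i \<times> G j) ij \<inter> (\<lambda>(i, j). F i \<times> G j) ij'"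
      if "ij \<in> I \<times> J" "ij' \<in> I \<times> J" "xy \<in> X \<times> Y"
        and "0 < (\<lambda>(i, j) (i', j') (x, y). s i i' x * t j j' y) ij ij' xy" for ij ij' xy
      using that A.dist_support B.dist_support A.dist_nonneg B.dist_nonneg
      by (auto simp: zero_less_mult_iff) (meson less_le_not_le)+
    show "(\<Sum>ij\<in>I \<times> J. \<Sum>ij'\<in>I \<times> J. (\<lambda>(i, j). w i * u j) ij * (\<lambda>(i, j). w i * u j) ij' *
            (\<lambda>(i, j) (i', j') (x, y). s i i' x * t j j' y) ij ij' xy) = 1 / card (X \<times> Y)"
      if "xy \<in> X \<times> Y" for xy
    proof -
      obtain x y where xy: "xy = (x, y)" "x \<in> X" "y \<in> Y" using \<open>xy \<in> X \<times> Y\<close> by blast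
      have "(\<Sum>ij\<in>I \<times> J. \<Sum>ij'\<in>I \<times> J. (\<lambda>(i, j). w i * u j) ij * (\<lambda>(i, j). w i * u j) ij' *
            (\<lambda>(i, j) (i', j') (x, y). s i i' x * t j j' y) ij ij' xy) =
          (\<Sum>i\<in>I. \<Sum>j\<in>J. \<Sum>i'\<in>I. \<Sum>j'\<in>J. (w i * w i' * s i i' x) * (u j * u j' * t j j' y))"
        by (simp add: xy sum.cartesian_product' algebra_simps)
      also have "\<dots> = (\<Sum>i\<in>I. \<Sum>i'\<in>I. w i * w i' * s i i' x) * (\<Sum>j\<in>J. \<Sum>j'\<in>J. u j * u j' * t j j' y)"
        by (simp add: sum_product sum.swap[of _ J I])
      finally show ?thesis
        using A.balanced[OF xy(2)] B.balanced[OF xy(3)] by (simp add: card_cartesian_product)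
    qed
  qed (use A.finite_ground B.finite_ground A.finite_index B.finite_index A.set_subset B.set_subset
         A.weight_nonneg B.weight_nonneg A.dist_nonneg B.dist_nonneg in auto)
qed

lemma balanced_system_Plus:
  assumes "balanced_system X I F w s K" and "balanced_system Y J G u t L"
  defines "a \<equiv> card X / (card X + card Y)" and "b \<equiv> card Y / (card X + card Y)"
  shows "balanced_system (X <+> Y) (I \<times> J) (\<lambda>(i, j). Inl ` F i \<union> Inr ` G j) (\<lambda>(i, j). w i * u j)
           (\<lambda>(i, j) (i', j'). case_sum (\<lambda>x. a * s i i' x) (\<lambda>y. b * t j j' y)) (K + L)"
proof -
  interpret A: balanced_system X I F w s K by fact
  interpret B: balanced_system Y J G u t L by fact
  have "0 < a" "0 < b"
    using A.card_ground_pos B.card_ground_pos by (simp_all add: a_def b_def)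
  have "a + b = 1"
    using A.card_ground_pos unfolding a_def b_def by (simp flip: add_divide_distrib)
  show ?thesis
  proof unfold_locales
    show "card ((\<lambda>(i, j). Inl ` F i \<union> Inr ` G j) ij) \<le> K + L" if "ij \<in> I \<times> J" for ij
    proof -
      obtain i j where ij: "ij = (i, j)" "i \<in> I" "j \<in> J" using \<open>ij \<in> I \<times> J\<close> by blast
      have "card (Inl ` F i \<union> Inr ` G j :: (_ + _) set) \<le> card (F i) + card (G j)"
        using card_Un_le[of "Inl ` F i" "Inr ` G j"] by (simp add: card_image)
      then show ?thesis using ij A.card_set_le B.card_set_le by fastforce
    qed
    show "sum (\<lambda>(i, j). w i * u j) (I \<times> J) = 1"
      using A.weight_sum B.weight_sum by (simp flip: sum.cartesian_product sum_product)
    show "sum ((\<lambda>(i, j) (i', j'). case_sum (\<lambda>x. a * s i i' x) (\<lambda>y. b * t j j' y)) ij ij') (X <+> Y) = 1"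
      if "ij \<in> I \<times> J" "ij' \<in> I \<times> J" for ij ij'
      using that A.dist_sum B.dist_sum A.finite_ground B.finite_ground \<open>a + b = 1\<close>
      by (auto simp: sum.Plus comp_def simp flip: sum_distrib_left)
    show "0 \<le> (\<lambda>(i, j) (i', j'). case_sum (\<lambda>x. a * s i i' x) (\<lambda>y. b * t j j' y)) ij ij' z"
      if "ij \<in> I \<times> J" "ij' \<in> I \<times> J" "z \<in> X <+> Y" for ij ij' z
      using that A.dist_nonneg B.dist_nonneg \<open>0 < a\<close> \<open>0 < b\<close> by auto
    show "z \<in> (\<lambda>(i, j). Inl ` F i \<union> Inr ` G j) ij \<inter> (\<lambda>(i, j). Inl ` F i \<union> Inr ` G j) ij'"
      if "ij \<in> I \<times> J" "ij' \<in> I \<times> J" "z \<in> X <+> Y"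
        and "0 < (\<lambda>(i, j) (i', j'). case_sum (\<lambda>x. a * s i i' x) (\<lambda>y. b * t j j' y)) ij ij' z"
      for ij ij' z
      using that A.dist_support B.dist_support \<open>0 < a\<close> \<open>0 < b\<close>
      by (auto simp: zero_less_mult_iff)
    show "(\<Sum>ij\<in>I \<times> J. \<Sum>ij'\<in>I \<times> J. (\<lambda>(i, j). w i * u j) ij * (\<lambda>(i, j). w i * u j) ij' *
            (\<lambda>(i, j) (i', j'). case_sum (\<lambda>x. a * s i i' x) (\<lambda>y. b * t j j' y)) ij ij' z) =
          1 / card (X <+> Y)"
      if "z \<in> X <+> Y" for z
    proof -
      have card_Plus_eq: "card (X <+> Y) = card X + card Y"
        using A.finite_ground B.finite_ground by (simp add: card_Plus)
      show ?thesis
      proof (cases z)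
        case (Inl x)
        then have "x \<in> X" using that by auto
        have "(\<Sum>ij\<in>I \<times> J. \<Sum>ij'\<in>I \<times> J. (\<lambda>(i, j). w i * u j) ij * (\<lambda>(i, j). w i * u j) ij' *
                (\<lambda>(i, j) (i', j'). case_sum (\<lambda>x. a * s i i' x) (\<lambda>y. b * t j j' y)) ij ij' z) =
              a * (\<Sum>i\<in>I. \<Sum>i'\<in>I. w i * w i' * s i i' x) * (sum u J * sum u J)"
          by (simp add: Inl sum.cartesian_product' sum_product sum_distrib_left sum.swap[of _ J I]
                algebra_simps)
        then show ?thesis
          using A.balanced[OF \<open>x \<in> X\<close>] B.weight_sum A.card_ground_pos card_Plus_eq by (simp add: a_def)
      next
        case (Inr y)
        then have "y \<in> Y" using that by auto
        have "(\<Sum>ij\<in>I \<times> J. \<Sum>ij'\<in>I \<times> J. (\<lambda>(i, j). w i * u j) ij * (\<lambda>(i, j). w i * u j) ij' *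
                (\<lambda>(i, j) (i', j'). case_sum (\<lambda>x. a * s i i' x) (\<lambda>y. b * t j j' y)) ij ij' z) =
              b * (\<Sum>j\<in>J. \<Sum>j'\<in>J. u j * u j' * t j j' y) * (sum w I * sum w I)"
          by (simp add: Inr sum.cartesian_product' sum_product sum_distrib_left sum.swap[of _ J I]
                algebra_simps)
        then show ?thesis
          using B.balanced[OF \<open>y \<in> Y\<close>] A.weight_sum B.card_ground_pos card_Plus_eq by (simp add: b_def)
      qed
    qed
  qed (use A.finite_ground B.finite_ground A.finite_index B.finite_index A.set_subset B.set_subset
         A.weight_nonneg B.weight_nonneg in auto)
qed

lemma k_min_mult_le:
  assumes "1 \<le> a" "1 \<le> b"
  shows "k_min (a * b) \<le> k_min a * k_min b"
proof -
  obtain m F w s where "balanced_system {1..a} {1..m::nat} F w s (k_min a)"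
    using k_min_attained[OF assms(1)] .
  moreover obtain m' G u t where "balanced_system {1..b} {1..m'::nat} G u t (k_min b)"
    using k_min_attained[OF assms(2)] .
  ultimately show ?thesis
    using balanced_system.k_min_card_le[OF balanced_system_product] by (fastforce simp: card_cartesian_product)
qed

lemma k_min_add_le:
  assumes "1 \<le> a" "1 \<le> b"
  shows "k_min (a + b) \<le> k_min a + k_min b"
proof -
  obtain m F w s where "balanced_system {1..a} {1..m::nat} F w s (k_min a)"
    using k_min_attained[OF assms(1)] .
  moreover obtain m' G u t where "balanced_system {1..b} {1..m'::nat} G u t (k_min b)"
    using k_min_attained[OF assms(2)] .
  ultimately show ?thesis
    using balanced_system.k_min_card_le[OF balanced_system_Plus] by (fastforce simp: card_Plus)
qed

lemma k_min_power_le: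
  assumes "1 \<le> a"
  shows "k_min (a ^ j) \<le> k_min a ^ j"
proof (induction j)
  case 0
  show ?case using k_min_le_self[of 1] by simp
next
  case (Suc j)
  have "k_min (a * a ^ j) \<le> k_min a * k_min (a ^ j)"
    using k_min_mult_le assms by simp
  also have "\<dots> \<le> k_min a * k_min a ^ j"
    using Suc.IH by simp
  finally show ?case by simp
qed

section \<open>Translates of a difference basis\<close>

definition uniform_on :: "'a set \<Rightarrow> 'a \<Rightarrow> real" where
  "uniform_on M x = of_bool (x \<in> M) / card M"

lemma uniform_on_nonneg: "0 \<le> uniform_on M x"
  by (simp add: uniform_on_def)

lemma uniform_on_pos_imp_mem: "0 < uniform_on M x \<Longrightarrow> x \<in> M"
  by (cases "x \<in> M") (simp_all add: uniform_on_def)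

lemma sum_uniform_on:
  assumes "finite A" "M \<subseteq> A" "M \<noteq> {}"
  shows "sum (uniform_on M) A = 1"
proof -
  have "sum (uniform_on M) A = card M / card M"
    using assms(1,2) by (simp add: uniform_on_def Int_absorb1 flip: sum_divide_distrib)
  moreover have "0 < card M"
    using assms finite_subset[OF assms(2,1)] by (simp add: card_gt_0_iff)
  ultimately show ?thesis
    by simp
qed

lemma uniform_on_image:
  assumes "inj_on f A" "M \<subseteq> A" "x \<in> A"
  shows "uniform_on (f ` M) (f x) = uniform_on M x"
  using assms by (simp add: uniform_on_def card_image inj_on_image_mem_iff inj_on_subset)

lemma (in group) bij_betw_mult_right:
  "t \<in> carrier G \<Longrightarrow> bij_betw (\<lambda>x. x \<otimes> t) (carrier G) (carrier G)"
  by (rule bij_betw_byWitness[where f' = "\<lambda>x. x \<otimes> inv t"]) (auto simp: m_assoc)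

lemma (in group) r_coset_mult_eq_image:
  assumes "D \<subseteq> carrier G" "g \<in> carrier G" "t \<in> carrier G"
  shows "D #> (g \<otimes> t) = (\<lambda>x. x \<otimes> t) ` (D #> g)"
  using coset_mult_assoc[OF assms] by (auto simp: r_coset_def)

lemma card_r_coset_le: "finite D \<Longrightarrow> card (D #>\<^bsub>G\<^esub> g) \<le> card D"
proof -
  have "D #>\<^bsub>G\<^esub> g = (\<lambda>d. d \<otimes>\<^bsub>G\<^esub> g) ` D"
    by (auto simp: r_coset_def)
  then show "finite D \<Longrightarrow> card (D #>\<^bsub>G\<^esub> g) \<le> card D"
    by (simp add: card_image_le)
qed

lemma (in group) uniform_on_translates_mult:
  assumes D: "D \<subseteq> carrier G" and "g \<in> carrier G" "h \<in> carrier G" "x \<in> carrier G" "t \<in> carrier G"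
  shows "uniform_on ((D #> (g \<otimes> t)) \<inter> (D #> (h \<otimes> t))) (x \<otimes> t) = uniform_on ((D #> g) \<inter> (D #> h)) x"
proof -
  have "(D #> g) \<inter> (D #> h) \<subseteq> carrier G"
    using r_coset_subset_G[OF D] assms by auto
  then have "uniform_on ((\<lambda>y. y \<otimes> t) ` ((D #> g) \<inter> (D #> h))) (x \<otimes> t) = uniform_on ((D #> g) \<inter> (D #> h)) x"
    using uniform_on_image[OF inj_on_multc[OF \<open>t \<in> carrier G\<close>]] assms by simp
  moreover have "(\<lambda>y. y \<otimes> t) ` ((D #> g) \<inter> (D #> h)) = (D #> (g \<otimes> t)) \<inter> (D #> (h \<otimes> t))"
    using assms r_coset_subset_G[OF D] inj_on_multc[OF \<open>t \<in> carrier G\<close>]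
    by (simp add: r_coset_mult_eq_image[OF D] inj_on_image_Int)
  ultimately show ?thesis
    by simp
qed

definition difference_basis :: "('a, 'b) monoid_scheme \<Rightarrow> 'a set \<Rightarrow> bool" where
  "difference_basis G D \<longleftrightarrow> D \<subseteq> carrier G \<and> (\<forall>u\<in>carrier G. \<exists>a\<in>D. \<exists>b\<in>D. b \<otimes>\<^bsub>G\<^esub> u = a)"

lemma (in comm_group) difference_basis_translates_meet:
  assumes "difference_basis G D" "g \<in> carrier G" "h \<in> carrier G"
  shows "(D #> g) \<inter> (D #> h) \<noteq> {}"
proof -
  have "inv g \<otimes> h \<in> carrier G"
    using assms by simp
  then obtain a b where ab: "a \<in> D" "b \<in> D" "b \<otimes> (inv g \<otimes> h) = a"
    using assms(1) unfolding difference_basis_def by blast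
  have "b \<in> carrier G"
    using assms(1) ab(2) by (auto simp: difference_basis_def)
  have "(inv g \<otimes> h) \<otimes> g = inv g \<otimes> (g \<otimes> h)"
    using assms by (simp add: m_assoc m_comm[of h g])
  also have "\<dots> = h"
    using assms by (simp add: m_assoc[symmetric])
  finally have "a \<otimes> g = b \<otimes> h"
    using ab(3) \<open>b \<in> carrier G\<close> assms by (auto simp: m_assoc)
  then show ?thesis
    using ab by (auto simp: r_coset_def)
qed

lemma (in comm_group) balanced_system_translates:
  assumes fin: "finite (carrier G)" and basis: "difference_basis G D"
  defines "s \<equiv> \<lambda>g h. uniform_on ((D #> g) \<inter> (D #> h))"
  shows "balanced_system (carrier G) (carrier G) (\<lambda>g. D #> g) (\<lambda>_. 1 / order G) s (card D)"
proof -
  have D: "D \<subseteq> carrier G"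
    using basis by (simp add: difference_basis_def)
  have dist_sum: "sum (s g h) (carrier G) = 1" if "g \<in> carrier G" "h \<in> carrier G" for g h
    unfolding s_def using fin r_coset_subset_G[OF D] that difference_basis_translates_meet[OF basis that]
    by (intro sum_uniform_on) auto
  have s_translate: "s (g \<otimes> t) (h \<otimes> t) (x \<otimes> t) = s g h x"
    if "g \<in> carrier G" "h \<in> carrier G" "x \<in> carrier G" "t \<in> carrier G" for g h x t
    unfolding s_def using D that by (rule uniform_on_translates_mult)
  define \<Phi> where "\<Phi> x = (\<Sum>g\<in>carrier G. \<Sum>h\<in>carrier G. s g h x)" for x
  have \<Phi>_const: "\<Phi> x = \<Phi> \<one>" if "x \<in> carrier G" for x
  proof -
    note reindex = sum.reindex_bij_betw[OF bij_betw_mult_right[OF that]]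
    have "(\<Sum>h\<in>carrier G. s g (h \<otimes> x) x) = (\<Sum>h\<in>carrier G. s g h x)" for g
      using reindex[of "\<lambda>h. s g h x"] .
    then have "\<Phi> x = (\<Sum>g\<in>carrier G. \<Sum>h\<in>carrier G. s (g \<otimes> x) (h \<otimes> x) x)"
      unfolding \<Phi>_def using reindex[of "\<lambda>g. \<Sum>h\<in>carrier G. s g h x"] by simp
    also have "\<dots> = \<Phi> \<one>"
      unfolding \<Phi>_def
    proof (intro sum.cong refl)
      fix g h assume "g \<in> carrier G" "h \<in> carrier G"
      then show "s (g \<otimes> x) (h \<otimes> x) x = s g h \<one>"
        using s_translate[of g h \<one> x] that by simp
    qed
    finally show ?thesis .
  qed
  have "order G * \<Phi> \<one> = (\<Sum>x\<in>carrier G. \<Phi> x)"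
    by (simp add: order_def sum.cong[OF refl \<Phi>_const])
  also have "\<dots> = (\<Sum>g\<in>carrier G. \<Sum>h\<in>carrier G. sum (s g h) (carrier G))"
    unfolding \<Phi>_def by (subst sum.swap) (rule sum.cong[OF refl sum.swap])
  also have "\<dots> = order G * order G"
    by (simp add: dist_sum order_def)
  finally have \<Phi>: "\<Phi> x = order G" if "x \<in> carrier G" for x
    using \<Phi>_const[OF that] order_gt_0_iff_finite fin by simp
  show ?thesis
  proof unfold_locales
    show "card (D #> g) \<le> card D" for g
      using finite_subset[OF D fin] by (rule card_r_coset_le)
    show "(\<Sum>g\<in>carrier G. 1 / real (order G)) = 1"
      using fin one_closed by (auto simp: order_def)
    show "(\<Sum>g\<in>carrier G. \<Sum>h\<in>carrier G. 1 / order G * (1 / order G) * s g h x) = 1 / card (carrier G)"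
      if "x \<in> carrier G" for x
      using \<Phi>[OF that] fin order_gt_0_iff_finite unfolding \<Phi>_def
      by (simp add: order_def flip: sum_divide_distrib)
    show "x \<in> (D #> g) \<inter> (D #> h)" if "0 < s g h x" for g h x
      using that unfolding s_def by (rule uniform_on_pos_imp_mem)
  qed (use fin dist_sum r_coset_subset_G[OF D] in \<open>auto simp: s_def uniform_on_nonneg\<close>)
qed

lemma (in comm_group) k_min_order_le:
  "finite (carrier G) \<Longrightarrow> difference_basis G D \<Longrightarrow> k_min (order G) \<le> card D"
  using balanced_system.k_min_card_le[OF balanced_system_translates] by (simp add: order_def)

lemma comm_group_DirProd:
  assumes "comm_group G" "comm_group H"
  shows "comm_group (G \<times>\<times> H)"
proof (rule group.group_comm_groupI)
  show "group (G \<times>\<times> H)"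
    using assms by (intro DirProd_group) (simp_all add: comm_group.axioms(2))
  show "x \<otimes>\<^bsub>G \<times>\<times> H\<^esub> y = y \<otimes>\<^bsub>G \<times>\<times> H\<^esub> x"
    if "x \<in> carrier (G \<times>\<times> H)" "y \<in> carrier (G \<times>\<times> H)" for x y
    using that assms by (auto simp: mult_DirProd' comm_group_def comm_monoid.m_comm)
qed

lemma difference_basis_integer_mod_group:
  assumes "0 < m" "m \<le> t\<^sup>2" "t \<le> m"
  shows "difference_basis (integer_mod_group m) ({0..<int t} \<union> (\<lambda>j. t * j mod m) ` {0..int t})"
  unfolding difference_basis_def
proof (intro conjI ballI)
  show "{0..<int t} \<union> (\<lambda>j. t * j mod m) ` {0..int t} \<subseteq> carrier (integer_mod_group m)"
    using assms by (auto simp: carrier_integer_mod_group)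
  fix u assume "u \<in> carrier (integer_mod_group m)"
  then have u: "0 \<le> u" "u < m"
    using assms by (auto simp: carrier_integer_mod_group)
  have "0 < t" using assms by (cases t) auto
  \<comment> \<open>u = t j - b with 0 <= b < t and 0 <= j <= t\<close>
  define b where "b = (- u) mod t"
  define j where "j = (u + b) div t"
  have b: "0 \<le> b" "b < t"
    using \<open>0 < t\<close> by (simp_all add: b_def)
  have "int t dvd u + b"
    unfolding b_def by (simp add: dvd_eq_mod_eq_0 mod_add_right_eq)
  then have tj: "t * j = u + b"
    by (simp add: j_def)
  have "int t * j < int t * (t + 1)"
    using tj u b assms by (simp add: power2_eq_square algebra_simps flip: of_nat_mult)
  then have "j \<le> t"
    using \<open>0 < t\<close> by (simp add: mult_less_cancel_left_pos)
  have "0 \<le> int t * j"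
    using tj u b by simp
  then have "0 \<le> j"
    using \<open>0 < t\<close> by (simp add: zero_le_mult_iff)
  with \<open>j \<le> t\<close> have "t * j mod m \<in> (\<lambda>j. t * j mod m) ` {0..int t}" by auto
  moreover have "b \<in> {0..<int t}" using b by simp
  moreover have "b \<otimes>\<^bsub>integer_mod_group m\<^esub> u = t * j mod m"
    using tj by (simp add: add.commute)
  ultimately show "\<exists>a\<in>{0..<int t} \<union> (\<lambda>j. t * j mod m) ` {0..int t}.
      \<exists>b\<in>{0..<int t} \<union> (\<lambda>j. t * j mod m) ` {0..int t}. b \<otimes>\<^bsub>integer_mod_group m\<^esub> u = a"
    by blast
qed

lemma card_difference_basis_integer_mod_group:
  "card ({0..<int t} \<union> (\<lambda>j. t * j mod m) ` {0..int t}) \<le> 2 * t + 1"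
proof -
  have "card ({0..<int t} \<union> (\<lambda>j. t * j mod m) ` {0..int t}) \<le> card {0..<int t} + card {0..int t}"
    by (rule order_trans[OF card_Un_le add_left_mono[OF card_image_le]]) simp
  then show ?thesis by simp
qed

lemma small_difference_basis_integer_mod_group:
  assumes "1 \<le> m"
  obtains E where "difference_basis (integer_mod_group m) E" "card E \<le> 2 * sqrt m + 3"
proof
  define t where "t = nat \<lceil>sqrt m\<rceil>"
  have "real t = \<lceil>sqrt m\<rceil>"
    unfolding t_def by simp
  then have t: "sqrt m \<le> t" "t < sqrt m + 1"
    by linarith+
  have "m \<le> t\<^sup>2"
    using sqrt_le_D[OF t(1)] by (simp flip: of_nat_power)
  moreover have "t \<le> m"
  proof -
    have "sqrt m \<le> sqrt (m\<^sup>2)"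
      using assms by (intro real_sqrt_le_mono) (simp add: power2_eq_square)
    then show ?thesis
      unfolding t_def by (simp add: ceiling_le_iff nat_le_iff)
  qed
  ultimately show "difference_basis (integer_mod_group m)
      ({0..<int t} \<union> (\<lambda>j. t * j mod m) ` {0..int t})"
    using assms by (intro difference_basis_integer_mod_group) auto
  show "card ({0..<int t} \<union> (\<lambda>j. t * j mod m) ` {0..int t}) \<le> 2 * sqrt m + 3"
    using card_difference_basis_integer_mod_group[of t m] t by linarith
qed

lemma k_min_le_sqrt:
  assumes "1 \<le> m"
  shows "k_min m \<le> 2 * sqrt m + 3"
proof -
  obtain E where E: "difference_basis (integer_mod_group m) E" "card E \<le> 2 * sqrt m + 3"
    using small_difference_basis_integer_mod_group[OF assms] .
  have "k_min (order (integer_mod_group m)) \<le> card E"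
    using assms E(1) by (intro comm_group.k_min_order_le) (simp_all add: carrier_integer_mod_group)
  then show ?thesis
    using assms E(2) by (simp add: order_def carrier_integer_mod_group)
qed

lemma difference_basis_parabola:
  fixes p :: nat
  assumes "prime p" "2 < p" and E: "difference_basis (integer_mod_group p) E"
  shows "difference_basis (integer_mod_group p \<times>\<times> integer_mod_group p)
           ((\<lambda>x. (x, x\<^sup>2 mod p)) ` {0..<int p} \<union> {0} \<times> E)"
  unfolding difference_basis_def
proof (intro conjI ballI)
  show "(\<lambda>x. (x, x\<^sup>2 mod p)) ` {0..<int p} \<union> {0} \<times> E \<subseteq> carrier (integer_mod_group p \<times>\<times> integer_mod_group p)"
    using E assms(2) by (auto simp: difference_basis_def carrier_integer_mod_group)
  fix u assume "u \<in> carrier (integer_mod_group p \<times>\<times> integer_mod_group p)"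
  then obtain u1 u2 where u: "u = (u1, u2)" "0 \<le> u1" "u1 < p" "0 \<le> u2" "u2 < p"
    using assms(2) by (auto simp: carrier_integer_mod_group)
  show "\<exists>a\<in>(\<lambda>x. (x, x\<^sup>2 mod p)) ` {0..<int p} \<union> {0} \<times> E.
          \<exists>b\<in>(\<lambda>x. (x, x\<^sup>2 mod p)) ` {0..<int p} \<union> {0} \<times> E.
            b \<otimes>\<^bsub>integer_mod_group p \<times>\<times> integer_mod_group p\<^esub> u = a"
  proof (cases "u1 = 0")
    case True
    obtain a b where "a \<in> E" "b \<in> E" "(b + u2) mod p = a"
      using E u assms(2) by (fastforce simp: difference_basis_def carrier_integer_mod_group)
    then show ?thesis
      using u True by (intro bexI[of _ "(0, a)"] bexI[of _ "(0, b)"]) auto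
  next
    case False
    \<comment> \<open>(y, y^2) translated by u is (y + u1, (y + u1)^2) iff 2 u1 y + u1^2 = u2, solvable as p is odd\<close>
    have "prime (int p)" using assms(1) by simp
    moreover have "\<not> int p dvd 2 * u1"
      using u False assms(2) \<open>prime (int p)\<close> by (auto simp: prime_dvd_mult_iff dest: zdvd_imp_le)
    ultimately have "coprime (2 * u1) (int p)"
      using prime_imp_coprime coprime_commute by blast
    then obtain y where "[2 * u1 * y = u2 - u1\<^sup>2] (mod p)"
      using cong_solve_dvd_int[of "2 * u1" p "u2 - u1\<^sup>2"] by auto
    then have "[2 * u1 * y + u1\<^sup>2 = u2] (mod p)"
      using cong_add_rcancel[of "2 * u1 * y" "u1\<^sup>2" "u2 - u1\<^sup>2"] by simp
    then have "[y\<^sup>2 + u2 = y\<^sup>2 + (2 * u1 * y + u1\<^sup>2)] (mod p)"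
      by (intro cong_add cong_refl) (simp add: cong_sym_eq)
    also have "y\<^sup>2 + (2 * u1 * y + u1\<^sup>2) = (y + u1)\<^sup>2"
      by (simp add: power2_sum)
    finally have "(y mod p, (y mod p)\<^sup>2 mod p) \<otimes>\<^bsub>integer_mod_group p \<times>\<times> integer_mod_group p\<^esub> u =
        ((y mod p + u1) mod p, ((y mod p + u1) mod p)\<^sup>2 mod p)"
      using u by (simp add: Cong.cong_def mod_simps)
    moreover have "y mod p \<in> {0..<int p}" "(y mod p + u1) mod p \<in> {0..<int p}"
      using assms(2) by auto
    ultimately show ?thesis by blast
  qed
qed

lemma k_min_prime_square_le:
  assumes "prime p" "2 < p"
  shows "k_min (p\<^sup>2) \<le> p + 2 * sqrt p + 3"
proof -
  have "1 \<le> p"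
    using assms(2) by simp
  then obtain E where E: "difference_basis (integer_mod_group p) E" "card E \<le> 2 * sqrt p + 3"
    by (rule small_difference_basis_integer_mod_group)
  let ?G = "integer_mod_group p \<times>\<times> integer_mod_group p"
  have "k_min (order ?G) \<le> card ((\<lambda>x. (x, x\<^sup>2 mod p)) ` {0..<int p} \<union> {0} \<times> E)"
    using assms E(1)
    by (intro comm_group.k_min_order_le comm_group_DirProd difference_basis_parabola)
      (simp_all add: carrier_integer_mod_group)
  also have "\<dots> \<le> card ((\<lambda>x. (x, x\<^sup>2 mod p)) ` {0..<int p}) + card ({0::int} \<times> E)"
    by (rule card_Un_le)
  also have "\<dots> \<le> p + card E"
    using card_image_le[of "{0..<int p}" "\<lambda>x. (x, x\<^sup>2 mod p)"] by (simp add: card_cartesian_product)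
  finally show ?thesis
    using E(2) assms by (simp add: order_def carrier_integer_mod_group power2_eq_square)
qed

section \<open>Pairs of primes with a prescribed gap\<close>

definition chebyshev_psi :: "nat \<Rightarrow> real" where
  "chebyshev_psi N = (\<Sum>d=1..N. mangoldt d)"

lemma chebyshev_psi_mono: "M \<le> N \<Longrightarrow> chebyshev_psi M \<le> chebyshev_psi N"
  unfolding chebyshev_psi_def by (intro sum_mono2) (auto simp: mangoldt_nonneg)

lemma chebyshev_psi_diff:
  "M \<le> N \<Longrightarrow> chebyshev_psi N - chebyshev_psi M = (\<Sum>d\<in>{M<..N}. mangoldt d)"
proof -
  assume "M \<le> N"
  then have "{1..N} = {1..M} \<union> {M<..N}" by auto
  then show ?thesis
    unfolding chebyshev_psi_def by (simp add: sum.union_disjoint ivl_disj_int)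
qed

lemma ln_fact_eq_sum_mangoldt: "ln (fact n) = (\<Sum>d=1..n. mangoldt d * real (n div d))"
proof (induction n)
  case 0
  show ?case by simp
next
  case (Suc n)
  have Suc_div: "real (Suc n div d) = real (n div d) + (if d dvd Suc n then 1 else 0)" for d
    by (simp add: div_Suc dvd_eq_mod_eq_0)
  have "(\<Sum>d=1..Suc n. mangoldt d * real (Suc n div d)) =
      (\<Sum>d=1..Suc n. mangoldt d * real (n div d)) + (\<Sum>d=1..Suc n. if d dvd Suc n then mangoldt d else 0)"
    by (subst sum.distrib[symmetric], rule sum.cong) (simp_all add: Suc_div algebra_simps)
  also have "(\<Sum>d=1..Suc n. mangoldt d * real (n div d)) = (\<Sum>d=1..n. mangoldt d * real (n div d))"
    by simp
  also have "(\<Sum>d=1..Suc n. if d dvd Suc n then mangoldt d else 0) = (\<Sum>d | d dvd Suc n. mangoldt d)"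
  proof -
    have "(\<Sum>d=1..Suc n. if d dvd Suc n then mangoldt d else 0) =
        (\<Sum>d\<in>{d\<in>{1..Suc n}. d dvd Suc n}. mangoldt d)"
      by (rule sum.inter_filter[symmetric]) simp
    also have "{d\<in>{1..Suc n}. d dvd Suc n} = {d. d dvd Suc n}"
      by (auto dest: dvd_imp_le intro: Suc_leI dvd_pos_nat[of "Suc n"])
    finally show ?thesis .
  qed
  also have "\<dots> = ln (real (Suc n))"
    using mangoldt_sum[of "Suc n", where 'a=real] by simp
  finally show ?case
    using Suc.IH by (simp add: ln_mult)
qed

lemma div_double_bounds:
  fixes n d :: nat
  shows "2 * (n div d) \<le> 2 * n div d" "2 * n div d \<le> 2 * (n div d) + 1"
proof -
  have "2 * n div d = 2 * (n div d) + (n mod d + n mod d) div d"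
    using div_add1_eq[of n n d] by (simp add: mult_2)
  moreover have "(n mod d + n mod d) div d \<le> 1"
  proof (cases "d = 0")
    case False
    then have "n mod d + n mod d < 2 * d"
      using mod_less_divisor[of d n] by linarith
    then have "(n mod d + n mod d) div d < 2"
      using False by (simp add: div_less_iff_less_mult)
    then show ?thesis by simp
  qed simp
  ultimately show "2 * (n div d) \<le> 2 * n div d" "2 * n div d \<le> 2 * (n div d) + 1"
    by simp_all
qed

lemma ln_central_binomial_eq_sum_mangoldt:
  "ln (real ((2 * n) choose n)) =
     (\<Sum>d=1..2*n. mangoldt d * (real (2 * n div d) - 2 * real (n div d)))"
proof -
  have "fact (2 * n) = fact n * fact n * ((2 * n) choose n)"
    using binomial_fact_lemma[of n "2 * n"] by simp
  then have "(fact (2 * n) :: real) = fact n * fact n * real ((2 * n) choose n)"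
    by (metis of_nat_fact of_nat_mult)
  then have "ln (fact (2 * n) :: real) = ln (fact n) + ln (fact n) + ln (real ((2 * n) choose n))"
    by (simp add: ln_mult)
  moreover have "(\<Sum>d=1..n. mangoldt d * real (n div d)) = (\<Sum>d=1..2*n. mangoldt d * real (n div d))"
    by (rule sum.mono_neutral_left) auto
  ultimately have "ln (real ((2 * n) choose n)) =
      (\<Sum>d=1..2*n. mangoldt d * real (2 * n div d)) - 2 * (\<Sum>d=1..2*n. mangoldt d * real (n div d))"
    using ln_fact_eq_sum_mangoldt[of "2 * n"] ln_fact_eq_sum_mangoldt[of n] by simp
  also have "\<dots> = (\<Sum>d=1..2*n. mangoldt d * (real (2 * n div d) - 2 * real (n div d)))"
    by (simp add: sum_distrib_left sum_subtractf algebra_simps)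
  finally show ?thesis .
qed

lemma chebyshev_psi_double_diff_le: "chebyshev_psi (2 * n) - chebyshev_psi n \<le> n * ln 4"
proof -
  have "chebyshev_psi (2 * n) - chebyshev_psi n =
      (\<Sum>d\<in>{n<..2*n}. mangoldt d * (real (2 * n div d) - 2 * real (n div d)))"
  proof -
    have "2 * n div d = 1" "n div d = 0" if "d \<in> {n<..2*n}" for d
      using that by (auto intro: div_nat_eqI)
    then show ?thesis
      by (simp add: chebyshev_psi_diff)
  qed
  also have "\<dots> \<le> (\<Sum>d=1..2*n. mangoldt d * (real (2 * n div d) - 2 * real (n div d)))"
  proof (rule sum_mono2)
    fix d
    have "2 * real (n div d) \<le> real (2 * n div d)"
      using div_double_bounds(1)[of n d] by linarith
    then show "0 \<le> mangoldt d * (real (2 * n div d) - 2 * real (n div d))"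
      by (simp add: mangoldt_nonneg)
  qed auto
  also have "\<dots> = ln (real ((2 * n) choose n))"
    by (rule ln_central_binomial_eq_sum_mangoldt[symmetric])
  also have "\<dots> \<le> ln (4 ^ n)"
    using binomial_le_pow2[of "2 * n" n] by (simp add: power_mult flip: of_nat_power)
  finally show ?thesis
    by (simp add: ln_realpow)
qed

lemma chebyshev_psi_double_ge:
  assumes "1 \<le> n"
  shows "n * ln 4 - ln (2 * real n) \<le> chebyshev_psi (2 * n)"
proof -
  have "n * ln 4 - ln (2 * real n) = ln (4 ^ n / (2 * n))"
    using assms by (simp add: ln_div ln_realpow)
  also have "\<dots> \<le> ln (real ((2 * n) choose n))"
    using central_binomial_lower_bound[of n] assms by simp
  also have "\<dots> = (\<Sum>d=1..2*n. mangoldt d * (real (2 * n div d) - 2 * real (n div d)))"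
    by (rule ln_central_binomial_eq_sum_mangoldt)
  also have "\<dots> \<le> chebyshev_psi (2 * n)"
    unfolding chebyshev_psi_def
  proof (rule sum_mono)
    fix d
    have "real (2 * n div d) - 2 * real (n div d) \<le> 1"
      using div_double_bounds(2)[of n d] by linarith
    then show "mangoldt d * (real (2 * n div d) - 2 * real (n div d)) \<le> mangoldt d"
      using mangoldt_nonneg[of d] by (simp add: mult_left_le)
  qed
  finally show ?thesis .
qed

lemma chebyshev_psi_le: "chebyshev_psi N \<le> 2 * ln 4 * N"
proof (induction N rule: less_induct)
  case (less N)
  show ?case
  proof (cases "N \<le> 1")
    case True
    then show ?thesis by (auto simp: chebyshev_psi_def le_Suc_eq)
  next
    case False
    define n where "n = (N + 1) div 2"
    have "N \<le> 2 * n" "n < N" "3 * n \<le> 2 * N"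
      using False unfolding n_def by presburger+
    have "chebyshev_psi N \<le> chebyshev_psi (2 * n)"
      using \<open>N \<le> 2 * n\<close> by (rule chebyshev_psi_mono)
    also have "\<dots> \<le> chebyshev_psi n + n * ln 4"
      using chebyshev_psi_double_diff_le[of n] by simp
    also have "\<dots> \<le> 3 * ln 4 * n"
      using less.IH[OF \<open>n < N\<close>] by (simp add: algebra_simps)
    also have "\<dots> \<le> 2 * ln 4 * N"
      using mult_left_mono[of "real (3 * n)" "real (2 * N)" "ln 4"] \<open>3 * n \<le> 2 * N\<close>
      by (simp add: algebra_simps)
    finally show ?thesis .
  qed
qed

lemma card_proper_prime_powers_le:
  fixes N :: nat
  assumes "1 \<le> N"
  shows "card {d\<in>{1..N}. primepow d \<and> \<not> prime d} \<le> sqrt N * log 2 N"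
proof -
  define s where "s = nat \<lfloor>sqrt N\<rfloor>"
  define K where "K = nat \<lfloor>log 2 N\<rfloor>"
  have "{d\<in>{1..N}. primepow d \<and> \<not> prime d} \<subseteq> (\<lambda>(a, k). a ^ k) ` ({1..s} \<times> {2..K})"
  proof
    fix d assume d: "d \<in> {d\<in>{1..N}. primepow d \<and> \<not> prime d}"
    then obtain p k where pk: "prime p" "0 < k" "d = p ^ k"
      unfolding primepow_def by auto
    have "2 \<le> k" using pk d by (cases "k = 1") auto
    have "2 \<le> p" using prime_ge_2_nat[OF pk(1)] .
    have "p\<^sup>2 \<le> p ^ k"
      using power_increasing[OF \<open>2 \<le> k\<close>, of p] \<open>2 \<le> p\<close> by simp
    then have "p\<^sup>2 \<le> N"
      using d pk by simp
    then have "p \<le> s"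
      unfolding s_def using real_le_rsqrt[of p N] by (simp add: le_nat_floor flip: of_nat_power)
    have "2 ^ k \<le> p ^ k"
      using \<open>2 \<le> p\<close> by (simp add: power_mono)
    also have "p ^ k \<le> N"
      using d pk by simp
    finally have "2 ^ k \<le> N" .
    then have "k \<le> K"
      unfolding K_def using assms by (simp add: le_nat_floor le_log_iff powr_realpow flip: of_nat_power)
    show "d \<in> (\<lambda>(a, k). a ^ k) ` ({1..s} \<times> {2..K})"
      using \<open>p \<le> s\<close> \<open>k \<le> K\<close> \<open>2 \<le> k\<close> \<open>2 \<le> p\<close> pk by (auto intro!: image_eqI[of _ _ "(p, k)"])
  qed
  then have "card {d\<in>{1..N}. primepow d \<and> \<not> prime d} \<le> card ({1..s} \<times> {2..K})"
    by (meson card_image_le card_mono finite_SigmaI finite_atLeastAtMost finite_imageI order_trans)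
  also have "\<dots> \<le> s * K"
    by (simp add: card_cartesian_product)
  finally have "card {d\<in>{1..N}. primepow d \<and> \<not> prime d} \<le> real s * real K"
    by (simp flip: of_nat_mult)
  also have "\<dots> \<le> sqrt N * log 2 N"
    unfolding s_def K_def using assms by (intro mult_mono) simp_all
  finally show ?thesis .
qed

lemma card_primes_between_ge:
  fixes x :: nat
  assumes "1 \<le> x"
  shows "(x * ln 4 - ln (6 * x)) / ln (6 * x) - sqrt (6 * x) * log 2 (6 * x) \<le>
           card {p. prime p \<and> x < p \<and> p \<le> 6 * x}"
proof -
  define N where "N = 6 * x"
  define Q where "Q = {d\<in>{1..N}. primepow d \<and> \<not> prime d}"
  have "0 < ln (real N)" using assms by (simp add: N_def)
  have "x * ln 4 - ln N \<le> chebyshev_psi N - chebyshev_psi x"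
    using chebyshev_psi_double_ge[of "3 * x"] chebyshev_psi_le[of x] assms
    by (simp add: N_def algebra_simps)
  also have "\<dots> = (\<Sum>d\<in>{x<..N}. mangoldt d)"
    by (simp add: N_def chebyshev_psi_diff)
  also have "\<dots> \<le> (\<Sum>d\<in>{x<..N}. of_bool (primepow d) * ln N)"
  proof (rule sum_mono)
    fix d assume "d \<in> {x<..N}"
    then have "0 < d" "ln d \<le> ln N" by auto
    then show "mangoldt d \<le> of_bool (primepow d) * ln N"
      using mangoldt_le[of d] by (cases "primepow d") (auto simp: mangoldt_def)
  qed
  also have "\<dots> = card {d\<in>{x<..N}. primepow d} * ln N"
    by (simp add: sum_distrib_right[symmetric] Int_def)
  also have "card {d\<in>{x<..N}. primepow d} \<le> card {p. prime p \<and> x < p \<and> p \<le> N} + card Q"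
    by (rule order_trans[OF card_mono card_Un_le]) (auto simp: Q_def)
  finally have "x * ln 4 - ln N \<le> (card {p. prime p \<and> x < p \<and> p \<le> N} + card Q) * ln N"
    using \<open>0 < ln N\<close> by (simp add: mult_right_mono)
  also have "\<dots> \<le> (card {p. prime p \<and> x < p \<and> p \<le> N} + sqrt N * log 2 N) * ln N"
    using card_proper_prime_powers_le[of N] assms \<open>0 < ln N\<close> by (simp add: Q_def N_def)
  finally show ?thesis
    using \<open>0 < ln N\<close> by (simp add: N_def divide_le_eq algebra_simps)
qed

lemma diff_less_if_div_eq:
  fixes i j b :: nat
  assumes "i div b = j div b" "i \<le> j" "0 < b"
  shows "j - i < b"
proof -
  have "j - i = j mod b - i mod b"
    using assms(1) div_mult_mod_eq[of i b] div_mult_mod_eq[of j b] by (metis add_diff_cancel_left)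
  then show ?thesis
    using mod_less_divisor[OF assms(3), of j] by linarith
qed

lemma card_le_if_differences_avoid:
  fixes S :: "nat set"
  assumes S: "S \<subseteq> {c<..c + N}" and "1 \<le> a" "1 \<le> b"
    and avoid: "\<And>p q. p \<in> S \<Longrightarrow> q \<in> S \<Longrightarrow> p < q \<Longrightarrow> q - p < a \<or> b < q - p"
  shows "card S \<le> (N div b + 1) * a"
proof -
  define block where "block p = (p - c - 1) div b" for p
  have "finite S" using S finite_subset by blast
  have block_card: "card {p\<in>S. block p = k} \<le> a" for k
  proof (cases "{p\<in>S. block p = k} = {}")
    case False
    define m where "m = Min {p\<in>S. block p = k}"
    have m: "m \<in> S" "block m = k" "\<And>q. q \<in> S \<Longrightarrow> block q = k \<Longrightarrow> m \<le> q"
      using Min_in[OF _ False] \<open>finite S\<close> by (auto simp: m_def)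
    have "{p\<in>S. block p = k} \<subseteq> {m..<m + a}"
    proof
      fix q assume "q \<in> {p\<in>S. block p = k}"
      then have q: "q \<in> S" "block q = k" by auto
      have "m \<le> q" using m(3) q .
      moreover have "q - m < a"
      proof (cases "m = q")
        case False
        have "(q - c - 1) - (m - c - 1) < b"
          using q m \<open>m \<le> q\<close> \<open>1 \<le> b\<close> unfolding block_def
          by (intro diff_less_if_div_eq diff_le_mono) auto
        then have "q - m < b"
          using S q(1) m(1) \<open>m \<le> q\<close> by auto
        then show ?thesis
          using avoid[OF m(1) q(1)] False \<open>m \<le> q\<close> by auto
      qed (use \<open>1 \<le> a\<close> in simp)
      ultimately show "q \<in> {m..<m + a}" by simp
    qed
    then show ?thesis
      using card_mono[of "{m..<m + a}"] by fastforce
  qed (simp only: card.empty)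
  have "block p \<le> N div b" if "p \<in> S" for p
  proof -
    have "p \<in> {c<..c + N}" using S that by blast
    then have "p - c - 1 \<le> N" by auto
    then show ?thesis unfolding block_def by (rule div_le_mono)
  qed
  then have "S \<subseteq> (\<Union>k\<le>N div b. {p\<in>S. block p = k})"
    by auto
  then have "card S \<le> card (\<Union>k\<le>N div b. {p\<in>S. block p = k})"
    using \<open>finite S\<close> by (intro card_mono) auto
  also have "\<dots> \<le> (\<Sum>k\<le>N div b. card {p\<in>S. block p = k})"
    by (rule card_UN_le) simp
  also have "\<dots> \<le> (N div b + 1) * a"
    using sum_mono[of "{..N div b}" "\<lambda>k. card {p\<in>S. block p = k}" "\<lambda>_. a"] block_card by simp
  finally show ?thesis .
qed

lemma card_primes_between_le_if_no_gap:
  fixes x :: nat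
  assumes "2 \<le> x"
    and no_pair: "\<not> (\<exists>p q. prime p \<and> prime q \<and> x < p \<and> p < q \<and> q \<le> 6 * x \<and>
      x powr 0.6 \<le> real q - real p \<and> real q - real p \<le> x powr 0.9)"
  shows "card {p. prime p \<and> x < p \<and> p \<le> 6 * x} \<le> (5 * x / (x powr 0.9 - 1) + 1) * (x powr 0.6 + 1)"
proof -
  define S where "S = {p. prime p \<and> x < p \<and> p \<le> 6 * x}"
  define a where "a = nat \<lceil>x powr 0.6\<rceil>"
  define b where "b = nat \<lfloor>x powr 0.9\<rfloor>"
  have "0 < x powr 0.6" "1 < x powr 0.9"
    using assms(1) by simp_all
  then have "real a = \<lceil>x powr 0.6\<rceil>" "real b = \<lfloor>x powr 0.9\<rfloor>"
    unfolding a_def b_def by simp_all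
  then have a: "x powr 0.6 \<le> a" "a < x powr 0.6 + 1" and b: "b \<le> x powr 0.9" "x powr 0.9 - 1 < b"
    by linarith+
  then have "1 \<le> a" "1 \<le> b"
    using \<open>0 < x powr 0.6\<close> \<open>1 < x powr 0.9\<close> by (cases a; cases b; simp)+
  have "q - p < a \<or> b < q - p" if "p \<in> S" "q \<in> S" "p < q" for p q
  proof (rule ccontr)
    assume "\<not> (q - p < a \<or> b < q - p)"
    then have "real a \<le> real q - real p" "real q - real p \<le> real b"
      using \<open>p < q\<close> by (simp_all add: not_less flip: of_nat_diff)
    then have "x powr 0.6 \<le> real q - real p" "real q - real p \<le> x powr 0.9"
      using a(1) b(1) by linarith+
    then show False
      using no_pair that unfolding S_def by blast
  qed
  then have "card S \<le> (5 * x div b + 1) * a"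
    using \<open>1 \<le> a\<close> \<open>1 \<le> b\<close> by (intro card_le_if_differences_avoid[of S x "5 * x"]) (auto simp: S_def)
  then have "real (card S) \<le> real ((5 * x div b + 1) * a)"
    by (simp only: of_nat_le_iff)
  also have "\<dots> = (real (5 * x div b) + 1) * real a"
    by (simp add: algebra_simps)
  also have "\<dots> \<le> (5 * x / (x powr 0.9 - 1) + 1) * (x powr 0.6 + 1)"
  proof (intro mult_mono add_right_mono)
    have "real (5 * x div b) \<le> 5 * x / b"
      by (rule of_nat_div_le_of_nat)
    also have "\<dots> \<le> 5 * x / (x powr 0.9 - 1)"
      using b \<open>1 < x powr 0.9\<close> by (intro divide_left_mono) auto
    finally show "real (5 * x div b) \<le> 5 * x / (x powr 0.9 - 1)" .
  qed (use a \<open>1 < x powr 0.9\<close> in auto)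
  finally show ?thesis
    by (simp add: S_def)
qed

lemma eventually_prime_pair:
  "eventually (\<lambda>x. \<exists>p q. prime p \<and> prime q \<and> x < p \<and> p < q \<and> q \<le> 6 * x \<and>
      x powr 0.6 \<le> real q - real p \<and> real q - real p \<le> x powr 0.9) sequentially"
proof -
  have "eventually (\<lambda>x::nat. (5 * x / (x powr 0.9 - 1) + 1) * (x powr 0.6 + 1) <
      (x * ln 4 - ln (6 * x)) / ln (6 * x) - sqrt (6 * x) * log 2 (6 * x)) sequentially"
    by real_asymp
  with eventually_ge_at_top[of 2]
  show ?thesis
  proof eventually_elim
    case (elim x)
    \<comment> \<open>Otherwise each block of about x^0.9 consecutive integers contains at most about x^0.6
      of the primes in (x, 6x], fewer in total than Chebyshev's bound allows.\<close>
    then show ?case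
      using card_primes_between_ge[of x] card_primes_between_le_if_no_gap[of x] by fastforce
  qed
qed

section \<open>The upper bound\<close>

lemma k_min_le_five_sqrt:
  assumes "1 \<le> m"
  shows "k_min m \<le> 5 * sqrt m"
proof -
  have "1 \<le> sqrt m" using assms by simp
  then show ?thesis using k_min_le_sqrt[OF assms] by linarith
qed

lemma k_min_prime_square_le_exp:
  assumes "prime p" "2 < p" "0 < y" "y \<le> p"
  shows "k_min (p\<^sup>2) \<le> p * exp (5 / sqrt y)"
proof -
  have "1 \<le> sqrt p" using assms(2) by simp
  have "k_min (p\<^sup>2) \<le> p + 5 * sqrt p"
    using k_min_prime_square_le[OF assms(1,2)] \<open>1 \<le> sqrt p\<close> by linarith
  also have "\<dots> = p + 5 * (p / sqrt p)"
    by (simp add: real_div_sqrt)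
  also have "\<dots> = p * (1 + 5 / sqrt p)"
    by (simp add: algebra_simps)
  also have "\<dots> \<le> p * (1 + 5 / sqrt y)"
    using assms(3,4) by (intro mult_left_mono add_left_mono divide_left_mono) auto
  also have "\<dots> \<le> p * exp (5 / sqrt y)"
    by (intro mult_left_mono) (simp_all add: add.commute)
  finally show ?thesis .
qed

lemma k_min_prime_power_product_square_le:
  assumes "prime p" "2 < p" "prime q" "2 < q" "0 < y" "y \<le> p" "y \<le> q"
  shows "k_min ((p ^ a * q ^ b)\<^sup>2) \<le> real (p ^ a * q ^ b) * exp (5 * real (a + b) / sqrt y)"
proof -
  have square: "(p ^ a * q ^ b)\<^sup>2 = (p\<^sup>2) ^ a * (q\<^sup>2) ^ b"
    by (simp add: power_mult_distrib power_mult[symmetric] mult.commute)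
  have "k_min ((p\<^sup>2) ^ a * (q\<^sup>2) ^ b) \<le> k_min ((p\<^sup>2) ^ a) * k_min ((q\<^sup>2) ^ b)"
    using assms by (intro k_min_mult_le) simp_all
  also have "\<dots> \<le> k_min (p\<^sup>2) ^ a * k_min (q\<^sup>2) ^ b"
    using assms by (intro mult_mono k_min_power_le) simp_all
  finally have "k_min ((p ^ a * q ^ b)\<^sup>2) \<le> real (k_min (p\<^sup>2)) ^ a * real (k_min (q\<^sup>2)) ^ b"
    unfolding square by (simp flip: of_nat_power of_nat_mult)
  also have "\<dots> \<le> (p * exp (5 / sqrt y)) ^ a * (q * exp (5 / sqrt y)) ^ b"
    using assms by (intro mult_mono power_mono k_min_prime_square_le_exp) simp_all
  also have "\<dots> = real (p ^ a * q ^ b) * exp (5 * real (a + b) / sqrt y)"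
    by (simp add: power_mult_distrib add_divide_distrib algebra_simps flip: exp_of_nat_mult exp_add)
  finally show ?thesis by simp
qed

lemma k_min_le_near_square:
  assumes "1 \<le> P" "P\<^sup>2 \<le> n" "n \<le> P\<^sup>2 * exp (2 * d)" "0 \<le> d"
  shows "k_min n \<le> k_min (P\<^sup>2) + 5 * sqrt (2 * d * n)"
proof (cases "P\<^sup>2 = n")
  case True
  then show ?thesis using assms(4) by simp
next
  case False
  then have "1 \<le> n - P\<^sup>2" using assms(2) by simp
  have "n * exp (- 2 * d) \<le> P\<^sup>2 * exp (2 * d) * exp (- 2 * d)"
    using assms(3) by (rule mult_right_mono) simp
  also have "\<dots> = P\<^sup>2"
    by (simp flip: exp_add)
  finally have "n - P\<^sup>2 \<le> n * (1 - exp (- 2 * d))"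
    using assms(2) by (simp add: of_nat_diff algebra_simps)
  also have "\<dots> \<le> n * (2 * d)"
    using exp_ge_add_one_self[of "- 2 * d"] by (intro mult_left_mono) auto
  finally have "n - P\<^sup>2 \<le> 2 * d * n" by (simp add: algebra_simps)
  have "k_min n \<le> k_min (P\<^sup>2) + k_min (n - P\<^sup>2)"
    using k_min_add_le[of "P\<^sup>2" "n - P\<^sup>2"] assms(1,2) \<open>1 \<le> n - P\<^sup>2\<close> by simp
  then have "real (k_min n) \<le> real (k_min (P\<^sup>2)) + real (k_min (n - P\<^sup>2))"
    by (simp only: of_nat_add[symmetric] of_nat_le_iff)
  also have "k_min (n - P\<^sup>2) \<le> 5 * sqrt (n - P\<^sup>2)"
    using k_min_le_five_sqrt[OF \<open>1 \<le> n - P\<^sup>2\<close>] by simp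
  also have "\<dots> \<le> 5 * sqrt (2 * d * n)"
    using \<open>n - P\<^sup>2 \<le> 2 * d * n\<close> by simp
  finally show ?thesis by simp
qed

lemma exists_exponents_near:
  fixes \<alpha> d L :: real
  assumes "0 < \<alpha>" "0 < d" "\<alpha> / d + 1 \<le> L / \<alpha>"
  obtains a b :: nat where "(a + b) * \<alpha> \<le> L"
    and "L - d \<le> a * \<alpha> + b * (\<alpha> + d)" "a * \<alpha> + b * (\<alpha> + d) \<le> L"
proof -
  have "0 < \<alpha> / d"
    using assms(1,2) by simp
  then have "0 \<le> L / \<alpha>"
    using assms(3) by linarith
  define h where "h = nat \<lfloor>L / \<alpha>\<rfloor>"
  have "real h = \<lfloor>L / \<alpha>\<rfloor>"
    unfolding h_def using \<open>0 \<le> L / \<alpha>\<close> by simp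
  then have h: "h \<le> L / \<alpha>" "L / \<alpha> < h + 1"
    by linarith+
  then have "h * \<alpha> \<le> L" "L - h * \<alpha> < \<alpha>"
    using assms(1) by (simp_all add: field_simps)
  have "\<alpha> / d < h"
    using assms(3) h(2) by linarith
  \<comment> \<open>For a + b = h the values a \<alpha> + b (\<alpha> + d) run through [h \<alpha>, h (\<alpha> + d)], which contains L,
    in steps of d.\<close>
  define t where "t = (L - h * \<alpha>) / d"
  have "0 \<le> t"
    using \<open>h * \<alpha> \<le> L\<close> assms(2) by (simp add: t_def)
  have "t < \<alpha> / d"
    using \<open>L - h * \<alpha> < \<alpha>\<close> assms(2) unfolding t_def by (rule divide_strict_right_mono)
  with \<open>\<alpha> / d < h\<close> have "t < h" by simp
  define b where "b = nat \<lfloor>t\<rfloor>"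
  have "real b = \<lfloor>t\<rfloor>"
    unfolding b_def using \<open>0 \<le> t\<close> by simp
  then have b: "b \<le> t" "t < b + 1"
    by linarith+
  then have "b \<le> h"
    using \<open>t < h\<close> by linarith
  have "b * d \<le> t * d" "t * d < (b + 1) * d"
    using b assms(2) by (simp_all add: mult_right_mono)
  moreover have "t * d = L - h * \<alpha>"
    using assms(2) by (simp add: t_def)
  ultimately show ?thesis
    using that[of "h - b" b] \<open>b \<le> h\<close> \<open>h * \<alpha> \<le> L\<close> by (simp add: of_nat_diff algebra_simps)
qed

lemma ln_diff_bounds_of_gap:
  fixes x p q :: nat
  assumes "0 < x" "x < p" "p < q" "q \<le> 6 * x"
    and "x powr 0.6 \<le> real q - real p" "real q - real p \<le> x powr 0.9"
  shows "1 / (6 * x powr 0.4) \<le> ln q - ln p" "ln q - ln p \<le> 1 / x powr 0.1"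
proof -
  have x: "real x = x powr 0.6 * x powr 0.4" "real x = x powr 0.9 * x powr 0.1"
    using assms(1) by (simp_all flip: powr_add)
  have "0 < real p" "0 < real q"
    using assms(2,3) by simp_all
  have "1 / (6 * x powr 0.4) = x powr 0.6 / (6 * x)"
    using assms(1) x(1) by (simp add: field_simps)
  also have "\<dots> \<le> (real q - real p) / q"
    using assms \<open>0 < real q\<close> by (intro frac_le) simp_all
  also have "\<dots> \<le> ln q - ln p"
    using ln_diff_le[of p q] \<open>0 < real p\<close> \<open>0 < real q\<close> by (simp add: field_simps)
  finally show "1 / (6 * x powr 0.4) \<le> ln q - ln p" .
  have "ln q - ln p \<le> (real q - real p) / p"
    using ln_diff_le[of q p] \<open>0 < real p\<close> \<open>0 < real q\<close> by simp
  also have "\<dots> \<le> x powr 0.9 / x"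
    using assms by (intro frac_le) simp_all
  also have "\<dots> = 1 / x powr 0.1"
    using assms(1) x(2) by (simp add: field_simps)
  finally show "ln q - ln p \<le> 1 / x powr 0.1" .
qed

lemma exists_power_product_near_sqrt:
  fixes n p q :: nat
  assumes "1 \<le> n" "1 < p" "p < q" "ln p / (ln q - ln p) + 1 \<le> (ln n / 2) / ln p"
  obtains a b where "(p ^ a * q ^ b)\<^sup>2 \<le> n" "n \<le> (p ^ a * q ^ b)\<^sup>2 * exp (2 * (ln q - ln p))"
    "real (a + b) * ln p \<le> ln n / 2"
proof -
  have "0 < ln p" "0 < ln q - ln p"
    using assms(2,3) by simp_all
  then obtain a b where ab: "real (a + b) * ln p \<le> ln n / 2"
    "ln n / 2 - (ln q - ln p) \<le> a * ln p + b * (ln p + (ln q - ln p))"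
    "a * ln p + b * (ln p + (ln q - ln p)) \<le> ln n / 2"
    using exists_exponents_near assms(4) by blast
  define P where "P = p ^ a * q ^ b"
  have "0 < P"
    using assms(2,3) by (simp add: P_def)
  have "ln (real P ^ 2) = 2 * (a * ln p + b * (ln p + (ln q - ln p)))"
    using assms(2,3) by (simp add: P_def ln_mult ln_realpow)
  then have "ln (real P ^ 2) \<le> ln n" "exp (ln n) \<le> exp (ln (real P ^ 2) + 2 * (ln q - ln p))"
    using ab(2,3) by simp_all
  then have "real P ^ 2 \<le> n" "n \<le> real P ^ 2 * exp (2 * (ln q - ln p))"
    using assms(1) \<open>0 < P\<close> by (simp_all add: exp_add)
  then have "P\<^sup>2 \<le> n" "n \<le> real (P\<^sup>2) * exp (2 * (ln q - ln p))"
    by (simp_all only: of_nat_power[symmetric] of_nat_le_iff)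
  then show ?thesis
    using that ab(1) unfolding P_def by blast
qed

lemma k_min_le_of_prime_pair:
  fixes n x p q :: nat
  assumes n: "1 \<le> n" "x \<le> (ln n / 2)\<^sup>2" "(ln n / 2)\<^sup>2 < real x + 1" and "2 \<le> x"
    and pq: "prime p" "prime q" "x < p" "p < q" "q \<le> 6 * x"
      "x powr 0.6 \<le> real q - real p" "real q - real p \<le> x powr 0.9"
    and room: "6 * ln (6 * real x) * x powr 0.4 + 1 \<le> sqrt x / ln (6 * real x)"
  shows "k_min n \<le> sqrt n * (exp (5 * sqrt (real x + 1) / (sqrt x * ln x)) + 5 * sqrt (2 / x powr 0.1))"
proof -
  define L where "L = ln n / 2"
  define d where "d = ln q - ln p"
  have "0 \<le> L" using n(1) by (simp add: L_def)
  have "x \<le> L\<^sup>2" "L\<^sup>2 < real x + 1"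
    using n(2,3) by (simp_all add: L_def)
  then have L: "sqrt x \<le> L" "L < sqrt (real x + 1)"
    using \<open>0 \<le> L\<close> by (simp_all add: real_le_lsqrt real_less_rsqrt)
  have ln_p: "0 < ln x" "ln x < ln p" "ln p \<le> ln (6 * real x)"
    using \<open>2 \<le> x\<close> pq(3-5) by simp_all
  have d: "1 / (6 * x powr 0.4) \<le> d" "d \<le> 1 / x powr 0.1"
    using ln_diff_bounds_of_gap[OF _ pq(3-7)] \<open>2 \<le> x\<close> by (simp_all add: d_def)
  have "0 < 1 / (6 * x powr 0.4)"
    using \<open>2 \<le> x\<close> by simp
  then have "ln p / d \<le> ln (6 * real x) / (1 / (6 * x powr 0.4))"
    using ln_p d(1) by (intro frac_le) simp_all
  moreover have "sqrt x / ln (6 * real x) \<le> L / ln p"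
    using L(1) \<open>0 \<le> L\<close> ln_p by (intro frac_le) simp_all
  ultimately have "ln p / d + 1 \<le> L / ln p"
    using room by simp
  moreover have "1 < p"
    using pq(3) \<open>2 \<le> x\<close> by simp
  ultimately obtain a b where P: "(p ^ a * q ^ b)\<^sup>2 \<le> n" "n \<le> (p ^ a * q ^ b)\<^sup>2 * exp (2 * d)"
    and ab: "real (a + b) * ln p \<le> L"
    using exists_power_product_near_sqrt[OF n(1) _ pq(4)] unfolding L_def d_def by blast
  have "real (a + b) \<le> L / ln p"
    using ab ln_p by (simp add: le_divide_eq)
  also have "\<dots> \<le> sqrt (real x + 1) / ln x"
    using L \<open>0 \<le> L\<close> ln_p by (intro frac_le) simp_all
  finally have "5 * real (a + b) / sqrt x \<le> 5 * (sqrt (real x + 1) / ln x) / sqrt x"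
    by (intro divide_right_mono mult_left_mono) simp_all
  also have "\<dots> = 5 * sqrt (real x + 1) / (sqrt x * ln x)"
    by simp
  finally have exponent: "5 * real (a + b) / sqrt x \<le> 5 * sqrt (real x + 1) / (sqrt x * ln x)" .
  have "real (p ^ a * q ^ b) \<le> sqrt n"
    using P(1) by (metis of_nat_le_iff of_nat_power real_le_rsqrt)
  with exponent have "real (p ^ a * q ^ b) * exp (5 * real (a + b) / sqrt x) \<le>
      sqrt n * exp (5 * sqrt (real x + 1) / (sqrt x * ln x))"
    by (intro mult_mono) simp_all
  moreover have "k_min ((p ^ a * q ^ b)\<^sup>2) \<le> real (p ^ a * q ^ b) * exp (5 * real (a + b) / sqrt x)"
    using pq(1-4) \<open>2 \<le> x\<close> by (intro k_min_prime_power_product_square_le) simp_all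
  ultimately have main: "k_min ((p ^ a * q ^ b)\<^sup>2) \<le> sqrt n * exp (5 * sqrt (real x + 1) / (sqrt x * ln x))"
    by linarith
  have "sqrt (2 * d * n) \<le> sqrt (2 / x powr 0.1 * n)"
    using d(2) by (intro real_sqrt_le_mono mult_right_mono) simp_all
  also have "\<dots> = sqrt n * sqrt (2 / x powr 0.1)"
    by (simp only: real_sqrt_mult mult.commute)
  finally have remainder: "5 * sqrt (2 * d * n) \<le> sqrt n * (5 * sqrt (2 / x powr 0.1))"
    by simp
  have "0 \<le> d"
    using d(1) \<open>0 < 1 / (6 * x powr 0.4)\<close> by linarith
  then have "k_min n \<le> k_min ((p ^ a * q ^ b)\<^sup>2) + 5 * sqrt (2 * d * n)"
    using k_min_le_near_square[OF _ P] pq(3,4) by simp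
  then show ?thesis
    using main remainder by (simp only: distrib_left)
qed

lemma k_min_upper_asymp:
  obtains U :: "nat \<Rightarrow> real"
  where "U \<longlonglongrightarrow> 1" and "eventually (\<lambda>n. k_min n \<le> sqrt n * U n) sequentially"
proof
  \<comment> \<open>For x = (ln sqrt n)^2 the product p^a q^b <= sqrt n of primes p, q > x has
    a + b <= sqrt (x + 1) / ln x factors, so the loss exp (5 (a + b) / sqrt x) tends to 1.\<close>
  define x where "x n = nat \<lfloor>(ln n / 2)\<^sup>2\<rfloor>" for n :: nat
  define V where "V m = exp (5 * sqrt (m + 1) / (sqrt m * ln m)) + 5 * sqrt (2 / m powr 0.1)" for m :: real
  have x_lim: "filterlim x sequentially sequentially"
    unfolding x_def
    by (intro filterlim_compose[OF filterlim_nat_sequentially]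
        filterlim_compose[OF filterlim_floor_sequentially]) real_asymp
  have "((\<lambda>m. V (real m)) \<longlonglongrightarrow> 1)"
    unfolding V_def by real_asymp
  then show "(\<lambda>n. V (x n)) \<longlonglongrightarrow> 1"
    by (rule filterlim_compose[OF _ x_lim])
  have "eventually (\<lambda>m. 6 * ln (6 * real m) * m powr 0.4 + 1 \<le> sqrt m / ln (6 * real m)) sequentially"
    by real_asymp
  with eventually_prime_pair eventually_ge_at_top[of 2]
  have "eventually (\<lambda>m. 2 \<le> m \<and> (\<exists>p q. prime p \<and> prime q \<and> m < p \<and> p < q \<and> q \<le> 6 * m \<and>
      m powr 0.6 \<le> real q - real p \<and> real q - real p \<le> m powr 0.9) \<and>
      6 * ln (6 * real m) * m powr 0.4 + 1 \<le> sqrt m / ln (6 * real m)) sequentially"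
    by eventually_elim (intro conjI)
  from eventually_compose_filterlim[OF this x_lim] eventually_ge_at_top[of 1]
  show "eventually (\<lambda>n. k_min n \<le> sqrt n * V (x n)) sequentially"
  proof eventually_elim
    case (elim n)
    have "real (x n) = \<lfloor>(ln n / 2)\<^sup>2\<rfloor>"
      by (simp add: x_def)
    then have x_bounds: "x n \<le> (ln n / 2)\<^sup>2" "(ln n / 2)\<^sup>2 < real (x n) + 1"
      by linarith+
    obtain p q where "prime p" "prime q" "x n < p" "p < q" "q \<le> 6 * x n"
      "x n powr 0.6 \<le> real q - real p" "real q - real p \<le> x n powr 0.9"
      using elim(1)[THEN conjunct2, THEN conjunct1] by blast
    from k_min_le_of_prime_pair[OF elim(2) x_bounds elim(1)[THEN conjunct1] this
        elim(1)[THEN conjunct2, THEN conjunct2]]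
    show ?case
      unfolding V_def .
  qed
qed

theorem theorem3:
  shows "(\<lambda>n. real (k_min n)) \<sim>[at_top] (\<lambda>n. sqrt (real n))"
proof (rule asymp_equivI')
  obtain U where U: "U \<longlonglongrightarrow> 1" "eventually (\<lambda>n. k_min n \<le> sqrt n * U n) sequentially"
    using k_min_upper_asymp .
  have upper: "eventually (\<lambda>n. k_min n / sqrt n \<le> U n) sequentially"
    using U(2) eventually_gt_at_top[of 0] by eventually_elim (simp add: divide_le_eq mult.commute)
  have lower: "eventually (\<lambda>n. 1 \<le> k_min n / sqrt n) sequentially"
    using eventually_ge_at_top[of 1] by eventually_elim (simp add: le_divide_eq sqrt_le_k_min)
  show "(\<lambda>n. k_min n / sqrt n) \<longlonglongrightarrow> 1"
    by (rule tendsto_sandwich[OF lower upper tendsto_const U(1)])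
qed

end
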